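(* Let $L$ be a finite-dimensional Lie superalgebra, let $r,s$ be factor sets on $L$, and put $R=(Z(L),L/Z(L),r)$, $S=(Z(L),L/Z(L),s)$, $Z_R=\{(x,0)\in R\}$, $Z_S=\{(x,0)\in S\}$. (1) Let $\lambda:R\to S$ be a Lie superalgebra isomorphism with $\lambda(Z_R)=Z_S$, and let $\mu\in\mathrm{Aut}(L/Z(L))$, $\nu\in\mathrm{Aut}(Z(L))$ be the automorphisms induced by $\lambda$, i.e. $\lambda(0,\bar a)+Z_S=(0,\mu(\bar a))+Z_S$ and $\lambda(x,0)=(\nu(x),0)$ for all $\bar a\in L/Z(L)$, $x\in Z(L)$. Then there exists an even linear map $\gamma:L/Z(L)\to Z(L)$ such that $\nu\big(r(\bar a,\bar b)+\gamma([\bar a,\bar b])\big)=s(\mu(\bar a),\mu(\bar b))$ for all $\bar a,\bar b\in L/Z(L)$. (2) Conversely, if $\mu\in\mathrm{Aut}(L/Z(L))$, $\nu\in\mathrm{Aut}(Z(L))$ and $\delta:L/Z(L)\to Z(L)$ is an even linear map such that $\nu\big(r(\bar a,\bar b)+\delta([\bar a,\bar b])\big)=s(\mu(\bar a),\mu(\bar b))$ for all $\bar a,\bar b$, then there exists a Lie superalgebra isomorphism $\lambda:R\to S$ induced by $\mu$ and $\nu$ (in the sense of (1)) with $\lambda(Z_R)=Z_S$.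
   Context: Lie superalgebras over a field of characteristic $\neq 2,3$; homomorphisms and "even linear maps" are degree-preserving. $Z(L)$ is the center. A factor set on $L$ is a bilinear map $r:L/Z(L)\times L/Z(L)\to Z(L)$ with, for homogeneous $\bar a,\bar b,\bar c$: $r(\bar a,\bar b)\in Z(L)_{|\bar a|+|\bar b|}$; $r(\bar a,\bar b)=-(-1)^{|\bar a||\bar b|}r(\bar b,\bar a)$; $r([\bar a,\bar b],\bar c)=r(\bar a,[\bar b,\bar c])-(-1)^{|\bar a||\bar b|}r(\bar b,[\bar a,\bar c])$. For a factor set $r$, $(Z(L),L/Z(L),r)$ is the Lie superalgebra of pairs $(x,\bar a)$, $x\in Z(L)$, $\bar a\in L/Z(L)$, graded componentwise, with componentwise addition and bracket $[(x_1,\bar a),(x_2,\bar b)]=(r(\bar a,\bar b),[\bar a,\bar b])$. *)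

theory Defs
  imports Main
begin

text \<open>A (super) vector space / Lie superalgebra over the field 'k, given by a carrier set,
operations, a Z/2-grading (lgr False = even part, lgr True = odd part) and a bracket.\<close>

record ('k, 'a) lsa =
  lcar  :: "'a set"
  lzero :: "'a"
  ladd  :: "'a \<Rightarrow> 'a \<Rightarrow> 'a"
  lsmul :: "'k \<Rightarrow> 'a \<Rightarrow> 'a"
  lgr   :: "bool \<Rightarrow> 'a set"
  lbr   :: "'a \<Rightarrow> 'a \<Rightarrow> 'a"

text \<open>Sign (-1)^(|a||b|) and degree sum |a|+|b| in Z/2 (degrees encoded as bool).\<close>
definition sg :: "bool \<Rightarrow> bool \<Rightarrow> 'k::field" where
  "sg i j = (if i \<and> j then -1 else 1)"

definition dsum :: "bool \<Rightarrow> bool \<Rightarrow> bool" where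
  "dsum i j = (i \<noteq> j)"

definition is_vs :: "('k::field, 'a, 'b) lsa_scheme \<Rightarrow> bool" where
  "is_vs A \<longleftrightarrow>
     lzero A \<in> lcar A \<and>
     (\<forall>x\<in>lcar A. \<forall>y\<in>lcar A. ladd A x y \<in> lcar A) \<and>
     (\<forall>c. \<forall>x\<in>lcar A. lsmul A c x \<in> lcar A) \<and>
     (\<forall>x\<in>lcar A. \<forall>y\<in>lcar A. \<forall>z\<in>lcar A. ladd A (ladd A x y) z = ladd A x (ladd A y z)) \<and>
     (\<forall>x\<in>lcar A. \<forall>y\<in>lcar A. ladd A x y = ladd A y x) \<and>
     (\<forall>x\<in>lcar A. ladd A (lzero A) x = x) \<and>
     (\<forall>x\<in>lcar A. \<exists>y\<in>lcar A. ladd A x y = lzero A) \<and>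
     (\<forall>c. \<forall>x\<in>lcar A. \<forall>y\<in>lcar A. lsmul A c (ladd A x y) = ladd A (lsmul A c x) (lsmul A c y)) \<and>
     (\<forall>c d. \<forall>x\<in>lcar A. lsmul A (c + d) x = ladd A (lsmul A c x) (lsmul A d x)) \<and>
     (\<forall>c d. \<forall>x\<in>lcar A. lsmul A (c * d) x = lsmul A c (lsmul A d x)) \<and>
     (\<forall>x\<in>lcar A. lsmul A 1 x = x)"

definition is_subspace :: "('k::field, 'a, 'b) lsa_scheme \<Rightarrow> 'a set \<Rightarrow> bool" where
  "is_subspace A U \<longleftrightarrow> U \<subseteq> lcar A \<and> lzero A \<in> U \<and>
     (\<forall>x\<in>U. \<forall>y\<in>U. ladd A x y \<in> U) \<and> (\<forall>c. \<forall>x\<in>U. lsmul A c x \<in> U)"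

definition is_lsa :: "('k::field, 'a, 'b) lsa_scheme \<Rightarrow> bool" where
  "is_lsa A \<longleftrightarrow>
     is_vs A \<and>
     (\<forall>i. is_subspace A (lgr A i)) \<and>
     lgr A False \<inter> lgr A True = {lzero A} \<and>
     (\<forall>x\<in>lcar A. \<exists>y\<in>lgr A False. \<exists>z\<in>lgr A True. x = ladd A y z) \<and>
     (\<forall>x\<in>lcar A. \<forall>y\<in>lcar A. lbr A x y \<in> lcar A) \<and>
     (\<forall>x\<in>lcar A. \<forall>y\<in>lcar A. \<forall>z\<in>lcar A. lbr A (ladd A x y) z = ladd A (lbr A x z) (lbr A y z)) \<and>
     (\<forall>x\<in>lcar A. \<forall>y\<in>lcar A. \<forall>z\<in>lcar A. lbr A x (ladd A y z) = ladd A (lbr A x y) (lbr A x z)) \<and>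
     (\<forall>c. \<forall>x\<in>lcar A. \<forall>y\<in>lcar A. lbr A (lsmul A c x) y = lsmul A c (lbr A x y)) \<and>
     (\<forall>c. \<forall>x\<in>lcar A. \<forall>y\<in>lcar A. lbr A x (lsmul A c y) = lsmul A c (lbr A x y)) \<and>
     (\<forall>i j. \<forall>x\<in>lgr A i. \<forall>y\<in>lgr A j. lbr A x y \<in> lgr A (dsum i j)) \<and>
     (\<forall>i j. \<forall>x\<in>lgr A i. \<forall>y\<in>lgr A j. lbr A x y = lsmul A (- sg i j) (lbr A y x)) \<and>
     (\<forall>i j. \<forall>x\<in>lgr A i. \<forall>y\<in>lgr A j. \<forall>z\<in>lcar A.
        lbr A (lbr A x y) z = ladd A (lbr A x (lbr A y z)) (lsmul A (- sg i j) (lbr A y (lbr A x z))))"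

inductive_set lspan :: "('k::field, 'a, 'b) lsa_scheme \<Rightarrow> 'a set \<Rightarrow> 'a set"
  for A :: "('k::field, 'a, 'b) lsa_scheme" and S :: "'a set" where
  lspan_zero: "lzero A \<in> lspan A S"
| lspan_step: "s \<in> S \<Longrightarrow> v \<in> lspan A S \<Longrightarrow> ladd A (lsmul A c s) v \<in> lspan A S"

definition fin_dim :: "('k::field, 'a, 'b) lsa_scheme \<Rightarrow> bool" where
  "fin_dim A \<longleftrightarrow> (\<exists>S. finite S \<and> S \<subseteq> lcar A \<and> lcar A \<subseteq> lspan A S)"

definition even_lin :: "('k::field, 'a, 'b) lsa_scheme \<Rightarrow> ('k, 'c, 'd) lsa_scheme \<Rightarrow> ('a \<Rightarrow> 'c) \<Rightarrow> bool" where
  "even_lin A B f \<longleftrightarrow>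
     (\<forall>x\<in>lcar A. f x \<in> lcar B) \<and>
     (\<forall>x\<in>lcar A. \<forall>y\<in>lcar A. f (ladd A x y) = ladd B (f x) (f y)) \<and>
     (\<forall>c. \<forall>x\<in>lcar A. f (lsmul A c x) = lsmul B c (f x)) \<and>
     (\<forall>i. \<forall>x\<in>lgr A i. f x \<in> lgr B i)"

definition lsa_hom :: "('k::field, 'a, 'b) lsa_scheme \<Rightarrow> ('k, 'c, 'd) lsa_scheme \<Rightarrow> ('a \<Rightarrow> 'c) \<Rightarrow> bool" where
  "lsa_hom A B f \<longleftrightarrow> even_lin A B f \<and>
     (\<forall>x\<in>lcar A. \<forall>y\<in>lcar A. f (lbr A x y) = lbr B (f x) (f y))"

definition lsa_iso :: "('k::field, 'a, 'b) lsa_scheme \<Rightarrow> ('k, 'c, 'd) lsa_scheme \<Rightarrow> ('a \<Rightarrow> 'c) \<Rightarrow> bool" where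
  "lsa_iso A B f \<longleftrightarrow> lsa_hom A B f \<and> bij_betw f (lcar A) (lcar B)"

definition lsa_aut :: "('k::field, 'a, 'b) lsa_scheme \<Rightarrow> ('a \<Rightarrow> 'a) \<Rightarrow> bool" where
  "lsa_aut A f \<longleftrightarrow> lsa_iso A A f"

definition center_set :: "('k::field, 'a, 'b) lsa_scheme \<Rightarrow> 'a set" where
  "center_set L = {z \<in> lcar L. \<forall>a\<in>lcar L. lbr L z a = lzero L}"

definition center :: "('k::field, 'a) lsa \<Rightarrow> ('k, 'a) lsa" where
  "center L = L\<lparr>lcar := center_set L, lgr := (\<lambda>i. lgr L i \<inter> center_set L)\<rparr>"

definition coset :: "('k::field, 'a, 'b) lsa_scheme \<Rightarrow> 'a \<Rightarrow> 'a set \<Rightarrow> 'a set" where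
  "coset A a I = ladd A a ` I"

definition rep :: "'a set \<Rightarrow> 'a" where
  "rep X = (SOME x. x \<in> X)"

definition quot :: "('k::field, 'a) lsa \<Rightarrow> 'a set \<Rightarrow> ('k, 'a set) lsa" where
  "quot L I =
     \<lparr> lcar = (\<lambda>a. coset L a I) ` lcar L,
       lzero = coset L (lzero L) I,
       ladd = (\<lambda>X Y. coset L (ladd L (rep X) (rep Y)) I),
       lsmul = (\<lambda>c X. coset L (lsmul L c (rep X)) I),
       lgr = (\<lambda>i. (\<lambda>a. coset L a I) ` lgr L i),
       lbr = (\<lambda>X Y. coset L (lbr L (rep X) (rep Y)) I) \<rparr>"

definition quotZ :: "('k::field, 'a) lsa \<Rightarrow> ('k, 'a set) lsa" where
  "quotZ L = quot L (center_set L)"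

definition factor_set :: "('k::field, 'a) lsa \<Rightarrow> ('a set \<Rightarrow> 'a set \<Rightarrow> 'a) \<Rightarrow> bool" where
  "factor_set L r \<longleftrightarrow>
    (let Q = quotZ L; Z = center L in
     (\<forall>a\<in>lcar Q. \<forall>b\<in>lcar Q. r a b \<in> lcar Z) \<and>
     (\<forall>a\<in>lcar Q. \<forall>a'\<in>lcar Q. \<forall>b\<in>lcar Q. r (ladd Q a a') b = ladd Z (r a b) (r a' b)) \<and>
     (\<forall>a\<in>lcar Q. \<forall>b\<in>lcar Q. \<forall>b'\<in>lcar Q. r a (ladd Q b b') = ladd Z (r a b) (r a b')) \<and>
     (\<forall>c. \<forall>a\<in>lcar Q. \<forall>b\<in>lcar Q. r (lsmul Q c a) b = lsmul Z c (r a b)) \<and>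
     (\<forall>c. \<forall>a\<in>lcar Q. \<forall>b\<in>lcar Q. r a (lsmul Q c b) = lsmul Z c (r a b)) \<and>
     (\<forall>i j. \<forall>a\<in>lgr Q i. \<forall>b\<in>lgr Q j. r a b \<in> lgr Z (dsum i j)) \<and>
     (\<forall>i j. \<forall>a\<in>lgr Q i. \<forall>b\<in>lgr Q j. r a b = lsmul Z (- sg i j) (r b a)) \<and>
     (\<forall>i j k. \<forall>a\<in>lgr Q i. \<forall>b\<in>lgr Q j. \<forall>c\<in>lgr Q k.
        r (lbr Q a b) c = ladd Z (r a (lbr Q b c)) (lsmul Z (- sg i j) (r b (lbr Q a c)))))"

definition pair_lsa :: "('k::field, 'a) lsa \<Rightarrow> ('a set \<Rightarrow> 'a set \<Rightarrow> 'a) \<Rightarrow> ('k, 'a \<times> 'a set) lsa" where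
  "pair_lsa L r =
    (let Q = quotZ L; Z = center L in
     \<lparr> lcar = lcar Z \<times> lcar Q,
       lzero = (lzero Z, lzero Q),
       ladd = (\<lambda>(x1, a) (x2, b). (ladd Z x1 x2, ladd Q a b)),
       lsmul = (\<lambda>c (x, a). (lsmul Z c x, lsmul Q c a)),
       lgr = (\<lambda>i. lgr Z i \<times> lgr Q i),
       lbr = (\<lambda>(x1, a) (x2, b). (r a b, lbr Q a b)) \<rparr>)"

definition ZR :: "('k::field, 'a) lsa \<Rightarrow> ('a \<times> 'a set) set" where
  "ZR L = {(x, lzero (quotZ L)) | x. x \<in> center_set L}"

end

theory Submission
  imports Defs
begin

(* An isomorphism phi of the algebras of pairs induced by mu and nu sends (0, a) to (g a, mu a) for
   an even linear g : L/Z(L) -> Z(L), and (x, 0) to (nu x, 0).  Since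
   (r(a,b), [a,b]) = (r(a,b), 0) + (0, [a,b]), comparing first components of phi applied to the
   bracket of (0, a) and (0, b) gives nu(r(a,b)) + g([a,b]) = s(mu a, mu b); hence gamma = nu^-1 o g
   works, nu^-1 being even again because the center is a graded subspace of L.  Conversely the
   map (x, a) |-> (nu(x + delta a), mu a) is an isomorphism of the required kind: the twisting
   identity for delta is exactly what makes it preserve brackets. *)

section \<open>Graded vector spaces on carrier sets\<close>

locale lsa_vs =
  fixes A :: "('k::field, 'a, 'b) lsa_scheme"
  assumes vs: "is_vs A"
begin

lemma zero_closed [simp]: "lzero A \<in> lcar A"
  and a_closed [simp]: "x \<in> lcar A \<Longrightarrow> y \<in> lcar A \<Longrightarrow> ladd A x y \<in> lcar A"
  and smult_closed [simp]: "x \<in> lcar A \<Longrightarrow> lsmul A c x \<in> lcar A"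
  and a_assoc: "x \<in> lcar A \<Longrightarrow> y \<in> lcar A \<Longrightarrow> z \<in> lcar A \<Longrightarrow>
    ladd A (ladd A x y) z = ladd A x (ladd A y z)"
  and a_comm: "x \<in> lcar A \<Longrightarrow> y \<in> lcar A \<Longrightarrow> ladd A x y = ladd A y x"
  and l_zero [simp]: "x \<in> lcar A \<Longrightarrow> ladd A (lzero A) x = x"
  and a_inv_ex: "x \<in> lcar A \<Longrightarrow> \<exists>y\<in>lcar A. ladd A x y = lzero A"
  and smult_r_distr: "x \<in> lcar A \<Longrightarrow> y \<in> lcar A \<Longrightarrow>
    lsmul A c (ladd A x y) = ladd A (lsmul A c x) (lsmul A c y)"
  and smult_l_distr: "x \<in> lcar A \<Longrightarrow> lsmul A (c + d) x = ladd A (lsmul A c x) (lsmul A d x)"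
  and smult_assoc: "x \<in> lcar A \<Longrightarrow> lsmul A (c * d) x = lsmul A c (lsmul A d x)"
  and smult_one [simp]: "x \<in> lcar A \<Longrightarrow> lsmul A 1 x = x"
  by (insert vs, unfold is_vs_def, (elim conjE, metis)+)

lemma r_zero [simp]: "x \<in> lcar A \<Longrightarrow> ladd A x (lzero A) = x"
  using a_comm l_zero zero_closed by metis

lemma a_lcancel:
  assumes "x \<in> lcar A" "y \<in> lcar A" "z \<in> lcar A" "ladd A x y = ladd A x z"
  shows "y = z"
proof -
  obtain x' where x': "x' \<in> lcar A" "ladd A x x' = lzero A" using a_inv_ex assms(1) by blast
  have "y = ladd A (ladd A x' x) y" using x' assms a_comm by simp
  also have "\<dots> = ladd A (ladd A x' x) z" using a_assoc x' assms by simp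
  also have "\<dots> = z" using x' assms a_comm by simp
  finally show ?thesis .
qed

lemma a_rcancel:
  "x \<in> lcar A \<Longrightarrow> y \<in> lcar A \<Longrightarrow> z \<in> lcar A \<Longrightarrow> ladd A y x = ladd A z x \<Longrightarrow> y = z"
  using a_lcancel a_comm by metis

lemma smult_l_null [simp]: "x \<in> lcar A \<Longrightarrow> lsmul A 0 x = lzero A"
  using smult_l_distr[of x 0 0] a_lcancel[of "lsmul A 0 x" "lsmul A 0 x" "lzero A"] by simp

lemma smult_r_null [simp]: "lsmul A c (lzero A) = lzero A"
  using smult_r_distr[of "lzero A" "lzero A" c]
    a_lcancel[of "lsmul A c (lzero A)" "lsmul A c (lzero A)" "lzero A"]
  by simp

lemma r_neg: "x \<in> lcar A \<Longrightarrow> ladd A x (lsmul A (-1) x) = lzero A"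
  using smult_l_distr[of x 1 "-1"] by simp

lemma l_neg: "x \<in> lcar A \<Longrightarrow> ladd A (lsmul A (-1) x) x = lzero A"
  using r_neg a_comm by simp

lemma add_neg_cancel:
  assumes "x \<in> lcar A" "y \<in> lcar A"
  shows "ladd A (ladd A x y) (lsmul A (-1) x) = y"
proof -
  have "ladd A (ladd A x y) (lsmul A (-1) x) = ladd A y (ladd A x (lsmul A (-1) x))"
    using assms a_comm[of x y] a_assoc[of y x] by simp
  then show ?thesis using assms r_neg by simp
qed

lemma a_comm_middle:
  assumes "a \<in> lcar A" "b \<in> lcar A" "c \<in> lcar A" "d \<in> lcar A"
  shows "ladd A (ladd A a b) (ladd A c d) = ladd A (ladd A a c) (ladd A b d)"
proof -
  have "ladd A (ladd A a b) (ladd A c d) = ladd A a (ladd A (ladd A b c) d)"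
    using assms a_assoc by simp
  also have "\<dots> = ladd A a (ladd A (ladd A c b) d)"
    using assms a_comm[of b c] by simp
  also have "\<dots> = ladd A (ladd A a c) (ladd A b d)"
    using assms a_assoc by simp
  finally show ?thesis .
qed

end

locale graded_vs = lsa_vs A for A +
  assumes gr_subspace: "is_subspace A (lgr A i)"
    and gr_disjoint: "lgr A False \<inter> lgr A True = {lzero A}"
    and gr_decomp: "x \<in> lcar A \<Longrightarrow> \<exists>y\<in>lgr A False. \<exists>z\<in>lgr A True. x = ladd A y z"
begin

lemma gr_carrier: "x \<in> lgr A i \<Longrightarrow> x \<in> lcar A"
  and gr_zero [simp]: "lzero A \<in> lgr A i"
  and gr_add: "x \<in> lgr A i \<Longrightarrow> y \<in> lgr A i \<Longrightarrow> ladd A x y \<in> lgr A i"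
  and gr_smult: "x \<in> lgr A i \<Longrightarrow> lsmul A c x \<in> lgr A i"
  using gr_subspace[of i] unfolding is_subspace_def by blast+

lemma gr_decomp_at:
  assumes "x \<in> lcar A"
  shows "\<exists>u\<in>lgr A i. \<exists>v\<in>lgr A (\<not> i). x = ladd A u v"
proof -
  obtain y z where "y \<in> lgr A False" "z \<in> lgr A True" "x = ladd A y z"
    using gr_decomp assms by blast
  moreover have "ladd A y z = ladd A z y" using calculation a_comm gr_carrier by blast
  ultimately show ?thesis by (metis (full_types))
qed

lemma homogeneous_sum_zero:
  assumes u: "u \<in> lgr A i" and v: "v \<in> lgr A (\<not> i)" and uv: "ladd A u v \<in> lgr A i"
  shows "v = lzero A"
proof -
  have "v = ladd A (ladd A u v) (lsmul A (-1) u)"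
    using add_neg_cancel u v gr_carrier by simp
  then have "v \<in> lgr A i" using uv u gr_add gr_smult by metis
  then show ?thesis using v gr_disjoint by (cases i) auto
qed

end

lemma even_lin_carrier: "even_lin A B f \<Longrightarrow> x \<in> lcar A \<Longrightarrow> f x \<in> lcar B"
  and even_lin_add: "even_lin A B f \<Longrightarrow> x \<in> lcar A \<Longrightarrow> y \<in> lcar A \<Longrightarrow>
    f (ladd A x y) = ladd B (f x) (f y)"
  and even_lin_smult: "even_lin A B f \<Longrightarrow> x \<in> lcar A \<Longrightarrow> f (lsmul A c x) = lsmul B c (f x)"
  and even_lin_gr: "even_lin A B f \<Longrightarrow> x \<in> lgr A i \<Longrightarrow> f x \<in> lgr B i"
  unfolding even_lin_def by blast+

lemma lsa_iso_even_lin: "lsa_iso A B f \<Longrightarrow> even_lin A B f"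
  and lsa_iso_br: "lsa_iso A B f \<Longrightarrow> x \<in> lcar A \<Longrightarrow> y \<in> lcar A \<Longrightarrow>
    f (lbr A x y) = lbr B (f x) (f y)"
  unfolding lsa_iso_def lsa_hom_def by blast+

lemma lsa_aut_even_lin: "lsa_aut A f \<Longrightarrow> even_lin A A f"
  and lsa_aut_bij: "lsa_aut A f \<Longrightarrow> bij_betw f (lcar A) (lcar A)"
  and lsa_aut_br: "lsa_aut A f \<Longrightarrow> x \<in> lcar A \<Longrightarrow> y \<in> lcar A \<Longrightarrow>
    f (lbr A x y) = lbr A (f x) (f y)"
  unfolding lsa_aut_def lsa_iso_def lsa_hom_def by blast+

lemma even_lin_zero:
  assumes "lsa_vs A" "lsa_vs B" "even_lin A B f"
  shows "f (lzero A) = lzero B"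
proof -
  interpret A: lsa_vs A by fact
  interpret B: lsa_vs B by fact
  have "f (lsmul A 0 (lzero A)) = lsmul B 0 (f (lzero A))"
    using assms(3) A.zero_closed unfolding even_lin_def by blast
  then show ?thesis
    using assms(3) A.zero_closed unfolding even_lin_def by simp
qed

lemma even_lin_comp: "even_lin A B f \<Longrightarrow> even_lin B C g \<Longrightarrow> even_lin A C (g \<circ> f)"
  unfolding even_lin_def by simp

lemma even_lin_reflects_gr:
  assumes A: "graded_vs A" and B: "graded_vs B"
    and f: "even_lin A B f" and inj: "inj_on f (lcar A)"
    and x: "x \<in> lcar A" and fx: "f x \<in> lgr B i"
  shows "x \<in> lgr A i"
proof -
  interpret A: graded_vs A by fact
  interpret B: graded_vs B by fact
  obtain u v where u: "u \<in> lgr A i" and v: "v \<in> lgr A (\<not> i)" and uv: "x = ladd A u v"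
    using A.gr_decomp_at x by blast
  have "f x = ladd B (f u) (f v)"
    using uv even_lin_add[OF f] A.gr_carrier u v by simp
  then have "f v = lzero B"
    using B.homogeneous_sum_zero even_lin_gr[OF f] u v fx by metis
  also have "\<dots> = f (lzero A)"
    using even_lin_zero A.lsa_vs_axioms B.lsa_vs_axioms f by metis
  finally have "v = lzero A"
    using inj A.gr_carrier v by (auto dest: inj_onD)
  then show ?thesis using uv u A.gr_carrier by simp
qed

lemma even_lin_inv_into:
  assumes A: "graded_vs A" and B: "graded_vs B"
    and f: "even_lin A B f" and bij: "bij_betw f (lcar A) (lcar B)"
  shows "even_lin B A (inv_into (lcar A) f)"
proof -
  interpret A: graded_vs A by fact
  interpret B: graded_vs B by fact
  let ?g = "inv_into (lcar A) f"
  have inj: "inj_on f (lcar A)" using bij by (rule bij_betw_imp_inj_on)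
  have g_in: "y \<in> lcar B \<Longrightarrow> ?g y \<in> lcar A"
    and f_g: "y \<in> lcar B \<Longrightarrow> f (?g y) = y" for y
    using bij by (simp_all add: bij_betw_def inv_into_into f_inv_into_f)
  have g_eqI: "x \<in> lcar A \<Longrightarrow> y \<in> lcar B \<Longrightarrow> f x = y \<Longrightarrow> ?g y = x" for x y
    using inj by (simp add: inv_into_f_eq)
  show ?thesis
    unfolding even_lin_def
  proof (intro conjI ballI allI)
    fix y assume "y \<in> lcar B"
    then show "?g y \<in> lcar A" by (rule g_in)
  next
    fix y y' assume "y \<in> lcar B" "y' \<in> lcar B"
    then show "?g (ladd B y y') = ladd A (?g y) (?g y')"
      using g_in f_g even_lin_add[OF f] by (intro g_eqI) simp_all
  next
    fix c y assume "y \<in> lcar B"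
    then show "?g (lsmul B c y) = lsmul A c (?g y)"
      using g_in f_g even_lin_smult[OF f] by (intro g_eqI) simp_all
  next
    fix i y assume y: "y \<in> lgr B i"
    then have "y \<in> lcar B" by (rule B.gr_carrier)
    then show "?g y \<in> lgr A i"
      using even_lin_reflects_gr[OF A B f inj] g_in f_g y by simp
  qed
qed

section \<open>The center and the quotient by it\<close>

lemma center_simps [simp]:
  "lcar (center L) = center_set L" "lzero (center L) = lzero L"
  "ladd (center L) = ladd L" "lsmul (center L) = lsmul L"
  "lgr (center L) i = lgr L i \<inter> center_set L" "lbr (center L) = lbr L"
  by (simp_all add: center_def)

lemma quotZ_simps:
  "lcar (quotZ L) = (\<lambda>a. coset L a (center_set L)) ` lcar L"
  "lzero (quotZ L) = coset L (lzero L) (center_set L)"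
  "ladd (quotZ L) X Y = coset L (ladd L (rep X) (rep Y)) (center_set L)"
  "lsmul (quotZ L) c X = coset L (lsmul L c (rep X)) (center_set L)"
  "lgr (quotZ L) i = (\<lambda>a. coset L a (center_set L)) ` lgr L i"
  "lbr (quotZ L) X Y = coset L (lbr L (rep X) (rep Y)) (center_set L)"
  by (simp_all add: quotZ_def quot_def)

lemma pair_lsa_simps [simp]:
  "lcar (pair_lsa L r) = center_set L \<times> lcar (quotZ L)"
  "lzero (pair_lsa L r) = (lzero L, lzero (quotZ L))"
  "ladd (pair_lsa L r) p q = (ladd L (fst p) (fst q), ladd (quotZ L) (snd p) (snd q))"
  "lsmul (pair_lsa L r) c p = (lsmul L c (fst p), lsmul (quotZ L) c (snd p))"
  "lgr (pair_lsa L r) i = (lgr L i \<inter> center_set L) \<times> lgr (quotZ L) i"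
  "lbr (pair_lsa L r) p q = (r (snd p) (snd q), lbr (quotZ L) (snd p) (snd q))"
  by (simp_all add: pair_lsa_def Let_def split: prod.split)

locale lie_superalgebra =
  fixes L :: "('k::field, 'a) lsa"
  assumes lsa: "is_lsa L"
begin

sublocale graded_vs L
  by unfold_locales (insert lsa, unfold is_lsa_def, (elim conjE, blast)+)

lemma br_closed: "x \<in> lcar L \<Longrightarrow> y \<in> lcar L \<Longrightarrow> lbr L x y \<in> lcar L"
  and br_add_left: "x \<in> lcar L \<Longrightarrow> y \<in> lcar L \<Longrightarrow> z \<in> lcar L \<Longrightarrow>
    lbr L (ladd L x y) z = ladd L (lbr L x z) (lbr L y z)"
  and br_add_right: "x \<in> lcar L \<Longrightarrow> y \<in> lcar L \<Longrightarrow> z \<in> lcar L \<Longrightarrow>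
    lbr L x (ladd L y z) = ladd L (lbr L x y) (lbr L x z)"
  and br_smult_left: "x \<in> lcar L \<Longrightarrow> y \<in> lcar L \<Longrightarrow> lbr L (lsmul L c x) y = lsmul L c (lbr L x y)"
  and br_gr: "x \<in> lgr L i \<Longrightarrow> y \<in> lgr L j \<Longrightarrow> lbr L x y \<in> lgr L (dsum i j)"
  by (insert lsa, unfold is_lsa_def, (elim conjE, metis)+)

abbreviation Z where "Z \<equiv> center_set L"

lemma center_carrier: "z \<in> Z \<Longrightarrow> z \<in> lcar L"
  unfolding center_set_def by blast

lemma center_zero [simp]: "lzero L \<in> Z"
  using br_smult_left[of "lzero L" _ 0] br_closed unfolding center_set_def by simp

lemma center_add: "x \<in> Z \<Longrightarrow> y \<in> Z \<Longrightarrow> ladd L x y \<in> Z"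
  using br_add_left unfolding center_set_def by simp

lemma center_smult: "x \<in> Z \<Longrightarrow> lsmul L c x \<in> Z"
  using br_smult_left unfolding center_set_def by simp

lemma center_translate:
  assumes t: "t \<in> Z"
  shows "ladd L t ` Z = Z"
proof
  show "ladd L t ` Z \<subseteq> Z" using center_add t by blast
  show "Z \<subseteq> ladd L t ` Z"
  proof
    fix w assume w: "w \<in> Z"
    have "w = ladd L t (ladd L (lsmul L (-1) t) w)"
      using a_assoc[of t "lsmul L (-1) t" w] r_neg[of t] t w center_carrier by simp
    then show "w \<in> ladd L t ` Z" using center_add center_smult t w by blast
  qed
qed

lemma center_homogeneous_parts:
  assumes x: "x \<in> Z" and y: "y \<in> lgr L False" and z: "z \<in> lgr L True"
    and xyz: "x = ladd L y z"
  shows "y \<in> Z" "z \<in> Z"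
proof -
  have yc: "y \<in> lcar L" and zc: "z \<in> lcar L" using y z gr_carrier by auto
  have on_homogeneous: "lbr L y b = lzero L \<and> lbr L z b = lzero L" if b: "b \<in> lgr L j" for b j
  proof -
    have bc: "b \<in> lcar L" using b gr_carrier by auto
    have sum: "ladd L (lbr L y b) (lbr L z b) = lzero L"
      using br_add_left[OF yc zc bc] x xyz bc unfolding center_set_def by simp
    have yb: "lbr L y b \<in> lgr L j" using br_gr[OF y b] by (simp add: dsum_def)
    have zb: "lbr L z b \<in> lgr L (\<not> j)" using br_gr[OF z b] by (simp add: dsum_def)
    have "lbr L z b = lzero L" using homogeneous_sum_zero[OF yb zb] sum by simp
    moreover have "ladd L (lbr L z b) (lbr L y b) = lzero L"
      using sum a_comm yb zb gr_carrier by metis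
    then have "lbr L y b = lzero L"
      using homogeneous_sum_zero[OF zb, of "lbr L y b"] yb by simp
    ultimately show ?thesis by simp
  qed
  have "lbr L y a = lzero L \<and> lbr L z a = lzero L" if a: "a \<in> lcar L" for a
  proof -
    obtain a0 a1 where a0: "a0 \<in> lgr L False" and a1: "a1 \<in> lgr L True" and aa: "a = ladd L a0 a1"
      using gr_decomp a by blast
    then show ?thesis
      using br_add_right on_homogeneous[OF a0] on_homogeneous[OF a1] yc zc gr_carrier by simp
  qed
  then show "y \<in> Z" "z \<in> Z" using yc zc unfolding center_set_def by blast+
qed

lemma graded_vs_center: "graded_vs (center L)"
proof unfold_locales
  have neg: "x \<in> Z \<Longrightarrow> \<exists>y\<in>Z. ladd L x y = lzero L" for x
    using r_neg center_smult center_carrier by blast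
  show "is_vs (center L)"
    unfolding is_vs_def center_simps
  proof (intro conjI)
    show "\<forall>x\<in>Z. \<forall>y\<in>Z. ladd L x y = ladd L y x" using a_comm center_carrier by blast
  qed (use neg center_add center_smult in
      \<open>simp_all add: center_carrier a_assoc smult_r_distr smult_l_distr smult_assoc\<close>)
  show "is_subspace (center L) (lgr (center L) i)" for i
    unfolding is_subspace_def center_simps
    using center_zero gr_zero center_add center_smult gr_add gr_smult by blast
  show "lgr (center L) False \<inter> lgr (center L) True = {lzero (center L)}"
    using gr_disjoint center_zero by auto
  show "\<exists>y\<in>lgr (center L) False. \<exists>z\<in>lgr (center L) True. x = ladd (center L) y z"
    if x: "x \<in> lcar (center L)" for x
  proof -
    have xZ: "x \<in> Z" using x by simp
    then obtain y z where y: "y \<in> lgr L False" and z: "z \<in> lgr L True" and xyz: "x = ladd L y z"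
      using gr_decomp center_carrier by blast
    have "y \<in> Z" "z \<in> Z" using center_homogeneous_parts[OF xZ y z xyz] by simp_all
    then show ?thesis using y z xyz by auto
  qed
qed

abbreviation Q where "Q \<equiv> quotZ L"

lemma coset_add_center:
  assumes a: "a \<in> lcar L" and z: "z \<in> Z"
  shows "coset L (ladd L a z) Z = coset L a Z"
proof -
  have "coset L (ladd L a z) Z = ladd L a ` ladd L z ` Z"
    unfolding coset_def image_image using a z center_carrier a_assoc by simp
  then show ?thesis using center_translate[OF z] by (simp add: coset_def)
qed

(* The operations of L/Z(L) act on representatives picked by Hilbert choice; all that matters is
   that the choice stays inside the coset. *)
lemma rep_coset:
  assumes a: "a \<in> lcar L"
  obtains z where "z \<in> Z" "rep (coset L a Z) = ladd L a z"
proof -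
  have "a \<in> coset L a Z" unfolding coset_def using a center_zero r_zero by (metis image_eqI)
  then have "rep (coset L a Z) \<in> coset L a Z" unfolding rep_def by (rule someI)
  then show ?thesis using that unfolding coset_def by blast
qed

lemma rep_carrier:
  assumes "X \<in> lcar Q"
  shows "rep X \<in> lcar L"
proof -
  obtain a where a: "a \<in> lcar L" "X = coset L a Z" using assms by (auto simp: quotZ_simps)
  then obtain z where "z \<in> Z" "rep X = ladd L a z" using rep_coset by metis
  then show ?thesis using a center_carrier by simp
qed

lemma quotZ_add_coset [simp]:
  assumes a: "a \<in> lcar L" and b: "b \<in> lcar L"
  shows "ladd Q (coset L a Z) (coset L b Z) = coset L (ladd L a b) Z"
proof -
  obtain z1 z2 where z1: "z1 \<in> Z" "rep (coset L a Z) = ladd L a z1"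
    and z2: "z2 \<in> Z" "rep (coset L b Z) = ladd L b z2"
    using rep_coset a b by metis
  have "ladd L (ladd L a z1) (ladd L b z2) = ladd L (ladd L a b) (ladd L z1 z2)"
    using a_comm_middle a b z1 z2 center_carrier by simp
  then show ?thesis
    using z1 z2 a b coset_add_center center_add by (simp add: quotZ_simps)
qed

lemma quotZ_smult_coset [simp]:
  assumes a: "a \<in> lcar L"
  shows "lsmul Q c (coset L a Z) = coset L (lsmul L c a) Z"
proof -
  obtain z where z: "z \<in> Z" "rep (coset L a Z) = ladd L a z"
    using rep_coset a by metis
  then show ?thesis
    using a coset_add_center center_smult center_carrier smult_r_distr by (simp add: quotZ_simps)
qed

lemma lsa_vs_quotZ: "lsa_vs Q"
proof
  have all_coset: "(\<forall>X\<in>lcar Q. P X) \<longleftrightarrow> (\<forall>a\<in>lcar L. P (coset L a Z))" for P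
    by (simp add: quotZ_simps)
  show "is_vs Q"
    unfolding is_vs_def all_coset quotZ_simps(2)
  proof (intro conjI)
    show "\<forall>a\<in>lcar L. \<forall>b\<in>lcar L.
      ladd Q (coset L a Z) (coset L b Z) = ladd Q (coset L b Z) (coset L a Z)"
      using a_comm by simp
    show "\<forall>a\<in>lcar L. \<exists>Y\<in>lcar Q. ladd Q (coset L a Z) Y = coset L (lzero L) Z"
    proof
      fix a assume a: "a \<in> lcar L"
      have "ladd Q (coset L a Z) (coset L (lsmul L (-1) a) Z) = coset L (lzero L) Z"
        using a r_neg by simp
      moreover have "coset L (lsmul L (-1) a) Z \<in> lcar Q" using a by (simp add: quotZ_simps)
      ultimately show "\<exists>Y\<in>lcar Q. ladd Q (coset L a Z) Y = coset L (lzero L) Z" by blast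
    qed
  qed (simp_all add: quotZ_simps(1) a_assoc smult_r_distr smult_l_distr smult_assoc)
qed

lemma quotZ_br_closed: "X \<in> lcar Q \<Longrightarrow> Y \<in> lcar Q \<Longrightarrow> lbr Q X Y \<in> lcar Q"
  using rep_carrier br_closed by (simp add: quotZ_simps)

sublocale center: graded_vs "center L"
  by (rule graded_vs_center)

sublocale quotient: lsa_vs Q
  by (rule lsa_vs_quotZ)

lemma factor_set_closed: "factor_set L r \<Longrightarrow> a \<in> lcar Q \<Longrightarrow> b \<in> lcar Q \<Longrightarrow> r a b \<in> Z"
  unfolding factor_set_def Let_def by simp

lemma ZR_eq: "ZR L = (\<lambda>z. (z, lzero Q)) ` Z"
  unfolding ZR_def by blast

lemma coset_ZR:
  assumes x: "x \<in> Z" and a: "a \<in> lcar Q"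
  shows "coset (pair_lsa L s) (x, a) (ZR L) = Z \<times> {a}"
proof -
  have "coset (pair_lsa L s) (x, a) (ZR L) = (\<lambda>w. (w, a)) ` ladd L x ` Z"
    unfolding coset_def ZR_eq image_image using a by simp
  also have "\<dots> = Z \<times> {a}" using center_translate[OF x] by auto
  finally show ?thesis .
qed

section \<open>From a twist to an isomorphism of the algebras of pairs\<close>

definition pair_map ::
  "('a set \<Rightarrow> 'a set) \<Rightarrow> ('a \<Rightarrow> 'a) \<Rightarrow> ('a set \<Rightarrow> 'a) \<Rightarrow> 'a \<times> 'a set \<Rightarrow> 'a \<times> 'a set"
  where "pair_map \<mu> \<nu> \<delta> = (\<lambda>(x, a). (\<nu> (ladd L x (\<delta> a)), \<mu> a))"

lemma pair_map_apply [simp]: "pair_map \<mu> \<nu> \<delta> (x, a) = (\<nu> (ladd L x (\<delta> a)), \<mu> a)"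
  by (simp add: pair_map_def)

context
  fixes \<mu> :: "'a set \<Rightarrow> 'a set" and \<nu> :: "'a \<Rightarrow> 'a" and \<delta> :: "'a set \<Rightarrow> 'a"
  assumes \<mu>_lin: "even_lin Q Q \<mu>" and \<mu>_bij: "bij_betw \<mu> (lcar Q) (lcar Q)"
    and \<nu>_lin: "even_lin (center L) (center L) \<nu>" and \<nu>_bij: "bij_betw \<nu> Z Z"
    and \<delta>_lin: "even_lin Q (center L) \<delta>"
begin

abbreviation lam where "lam \<equiv> pair_map \<mu> \<nu> \<delta>"

lemma add_twist_in_center: "x \<in> Z \<Longrightarrow> a \<in> lcar Q \<Longrightarrow> ladd L x (\<delta> a) \<in> Z"
  using center_add even_lin_carrier[OF \<delta>_lin] by simp

lemma pair_map_carrier: "p \<in> Z \<times> lcar Q \<Longrightarrow> lam p \<in> Z \<times> lcar Q"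
  using add_twist_in_center even_lin_carrier[OF \<nu>_lin] even_lin_carrier[OF \<mu>_lin] by auto

lemma pair_map_hom:
  assumes \<mu>_br: "\<And>a b. a \<in> lcar Q \<Longrightarrow> b \<in> lcar Q \<Longrightarrow> \<mu> (lbr Q a b) = lbr Q (\<mu> a) (\<mu> b)"
    and twist: "\<And>a b. a \<in> lcar Q \<Longrightarrow> b \<in> lcar Q \<Longrightarrow>
      \<nu> (ladd L (r a b) (\<delta> (lbr Q a b))) = s (\<mu> a) (\<mu> b)"
  shows "lsa_hom (pair_lsa L r) (pair_lsa L s) lam"
  unfolding lsa_hom_def even_lin_def pair_lsa_simps(1,5)
proof (intro conjI ballI allI; clarify)
  fix x a assume "x \<in> Z" "a \<in> lcar Q"
  then show "lam (x, a) \<in> Z \<times> lcar Q" by (intro pair_map_carrier) simp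
next
  fix x1 a x2 b assume x1: "x1 \<in> Z" and a: "a \<in> lcar Q" and x2: "x2 \<in> Z" and b: "b \<in> lcar Q"
  have "ladd L (ladd L x1 x2) (\<delta> (ladd Q a b)) = ladd L (ladd L x1 (\<delta> a)) (ladd L x2 (\<delta> b))"
    using a_comm_middle x1 x2 a b center_carrier even_lin_carrier[OF \<delta>_lin] even_lin_add[OF \<delta>_lin]
    by simp
  then show "lam (ladd (pair_lsa L r) (x1, a) (x2, b))
      = ladd (pair_lsa L s) (lam (x1, a)) (lam (x2, b))"
    using x1 x2 a b add_twist_in_center even_lin_add[OF \<nu>_lin] even_lin_add[OF \<mu>_lin] by simp
next
  fix c x a assume x: "x \<in> Z" and a: "a \<in> lcar Q"
  have "ladd L (lsmul L c x) (\<delta> (lsmul Q c a)) = lsmul L c (ladd L x (\<delta> a))"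
    using x a center_carrier even_lin_carrier[OF \<delta>_lin] even_lin_smult[OF \<delta>_lin] smult_r_distr
    by simp
  then show "lam (lsmul (pair_lsa L r) c (x, a)) = lsmul (pair_lsa L s) c (lam (x, a))"
    using x a add_twist_in_center even_lin_smult[OF \<nu>_lin] even_lin_smult[OF \<mu>_lin] by simp
next
  fix i x a assume x: "x \<in> lgr L i" "x \<in> Z" and a: "a \<in> lgr Q i"
  have "\<delta> a \<in> lgr L i \<inter> Z" using even_lin_gr[OF \<delta>_lin a] by simp
  then have "ladd L x (\<delta> a) \<in> lgr L i \<inter> Z" using x gr_add center_add by simp
  then have "\<nu> (ladd L x (\<delta> a)) \<in> lgr L i \<inter> Z"
    using even_lin_gr[OF \<nu>_lin, of "ladd L x (\<delta> a)" i] by simp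
  then show "lam (x, a) \<in> (lgr L i \<inter> Z) \<times> lgr Q i"
    using even_lin_gr[OF \<mu>_lin a] by simp
next
  fix x1 a x2 b assume "x1 \<in> Z" "a \<in> lcar Q" "x2 \<in> Z" "b \<in> lcar Q"
  then show "lam (lbr (pair_lsa L r) (x1, a) (x2, b))
      = lbr (pair_lsa L s) (lam (x1, a)) (lam (x2, b))"
    using twist \<mu>_br by simp
qed

lemma pair_map_inj: "inj_on lam (Z \<times> lcar Q)"
proof (rule inj_onI, clarify)
  fix x1 a x2 b assume x1: "x1 \<in> Z" and a: "a \<in> lcar Q" and x2: "x2 \<in> Z" and b: "b \<in> lcar Q"
    and eq: "lam (x1, a) = lam (x2, b)"
  have "\<mu> a = \<mu> b" using eq by simp
  then have ab: "a = b" using a b bij_betw_imp_inj_on[OF \<mu>_bij] by (rule inj_onD[rotated])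
  have "\<nu> (ladd L x1 (\<delta> a)) = \<nu> (ladd L x2 (\<delta> a))" using eq ab by simp
  then have "ladd L x1 (\<delta> a) = ladd L x2 (\<delta> a)"
    using add_twist_in_center[OF x1 a] add_twist_in_center[OF x2 a] bij_betw_imp_inj_on[OF \<nu>_bij]
    by (rule inj_onD[rotated])
  moreover have "\<delta> a \<in> lcar L" using even_lin_carrier[OF \<delta>_lin a] center_carrier by simp
  ultimately have "x1 = x2" using a_rcancel[of "\<delta> a" x1 x2] x1 x2 center_carrier by simp
  then show "x1 = x2 \<and> a = b" using ab by simp
qed

lemma pair_map_image: "lam ` (Z \<times> lcar Q) = Z \<times> lcar Q"
proof
  show "lam ` (Z \<times> lcar Q) \<subseteq> Z \<times> lcar Q" using pair_map_carrier by blast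
  show "Z \<times> lcar Q \<subseteq> lam ` (Z \<times> lcar Q)"
  proof clarify
    fix y b assume y: "y \<in> Z" and b: "b \<in> lcar Q"
    have "b \<in> \<mu> ` lcar Q" "y \<in> \<nu> ` Z"
      using b y bij_betw_imp_surj_on[OF \<mu>_bij] bij_betw_imp_surj_on[OF \<nu>_bij] by simp_all
    then obtain a w where a: "a \<in> lcar Q" "\<mu> a = b" and w: "w \<in> Z" "\<nu> w = y"
      by (auto elim!: imageE)
    define x where "x = ladd L w (lsmul L (-1) (\<delta> a))"
    have \<delta>a: "\<delta> a \<in> Z" using even_lin_carrier[OF \<delta>_lin a(1)] by simp
    then have "x \<in> Z" unfolding x_def using w center_add center_smult by simp
    have "ladd L x (\<delta> a) = w"
      unfolding x_def using a_assoc[of w] l_neg[of "\<delta> a"] w \<delta>a center_carrier by simp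
    then have "lam (x, a) = (y, b)" using a w by simp
    then show "(y, b) \<in> lam ` (Z \<times> lcar Q)" using \<open>x \<in> Z\<close> a by force
  qed
qed

lemma pair_map_center: "x \<in> Z \<Longrightarrow> lam (x, lzero Q) = (\<nu> x, lzero Q)"
  using even_lin_zero[OF quotient.lsa_vs_axioms center.lsa_vs_axioms \<delta>_lin]
    even_lin_zero[OF quotient.lsa_vs_axioms quotient.lsa_vs_axioms \<mu>_lin] center_carrier
  by simp

lemma pair_map_ZR: "lam ` ZR L = ZR L"
  unfolding ZR_eq image_image pair_map_center
  using pair_map_center bij_betw_imp_surj_on[OF \<nu>_bij] by (auto simp: image_iff)

lemma pair_map_coset:
  "a \<in> lcar Q \<Longrightarrow>
    coset (pair_lsa L s) (lam (lzero L, a)) (ZR L) = coset (pair_lsa L s) (lzero L, \<mu> a) (ZR L)"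
  using pair_map_carrier[of "(lzero L, a)"] coset_ZR even_lin_carrier[OF \<mu>_lin] by simp

end

section \<open>From an isomorphism of the algebras of pairs to a twist\<close>

context
  fixes r s :: "'a set \<Rightarrow> 'a set \<Rightarrow> 'a" and \<phi> :: "'a \<times> 'a set \<Rightarrow> 'a \<times> 'a set"
    and \<mu> :: "'a set \<Rightarrow> 'a set" and \<nu> :: "'a \<Rightarrow> 'a"
  assumes r: "factor_set L r" and \<phi>: "lsa_iso (pair_lsa L r) (pair_lsa L s) \<phi>"
    and \<mu>: "lsa_aut Q \<mu>" and \<nu>: "lsa_aut (center L) \<nu>"
    and \<phi>_coset: "\<forall>a\<in>lcar Q.
      coset (pair_lsa L s) (\<phi> (lzero L, a)) (ZR L) = coset (pair_lsa L s) (lzero L, \<mu> a) (ZR L)"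
    and \<phi>_center: "\<forall>x\<in>Z. \<phi> (x, lzero Q) = (\<nu> x, lzero Q)"
begin

abbreviation central_part where "central_part a \<equiv> fst (\<phi> (lzero L, a))"

lemma iso_on_quotient:
  assumes a: "a \<in> lcar Q"
  shows "snd (\<phi> (lzero L, a)) = \<mu> a" "central_part a \<in> Z"
proof -
  obtain y b where yb: "\<phi> (lzero L, a) = (y, b)" "y \<in> Z" "b \<in> lcar Q"
    using even_lin_carrier[OF lsa_iso_even_lin[OF \<phi>], of "(lzero L, a)"] a by auto
  have "Z \<times> {b} = Z \<times> {\<mu> a}"
    using bspec[OF \<phi>_coset a] coset_ZR yb even_lin_carrier[OF lsa_aut_even_lin[OF \<mu>] a] by simp
  then have "b = \<mu> a" using center_zero by blast
  then show "snd (\<phi> (lzero L, a)) = \<mu> a" "central_part a \<in> Z" using yb by simp_all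
qed

lemma central_part_even_lin: "even_lin Q (center L) central_part"
  unfolding even_lin_def
proof (intro conjI ballI allI)
  fix a assume "a \<in> lcar Q"
  then show "central_part a \<in> lcar (center L)" using iso_on_quotient by simp
next
  fix a b assume a: "a \<in> lcar Q" and b: "b \<in> lcar Q"
  have "\<phi> (ladd (pair_lsa L r) (lzero L, a) (lzero L, b))
      = ladd (pair_lsa L s) (\<phi> (lzero L, a)) (\<phi> (lzero L, b))"
    using a b even_lin_add[OF lsa_iso_even_lin[OF \<phi>], of "(lzero L, a)" "(lzero L, b)"] by simp
  then show "central_part (ladd Q a b) = ladd (center L) (central_part a) (central_part b)"
    using a b iso_on_quotient by simp
next
  fix c a assume a: "a \<in> lcar Q"
  have "\<phi> (lsmul (pair_lsa L r) c (lzero L, a)) = lsmul (pair_lsa L s) c (\<phi> (lzero L, a))"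
    using a even_lin_smult[OF lsa_iso_even_lin[OF \<phi>], of "(lzero L, a)" c] by simp
  then show "central_part (lsmul Q c a) = lsmul (center L) c (central_part a)"
    using a iso_on_quotient by simp
next
  fix i a assume a: "a \<in> lgr Q i"
  then have "\<phi> (lzero L, a) \<in> lgr (pair_lsa L s) i"
    using even_lin_gr[OF lsa_iso_even_lin[OF \<phi>], of "(lzero L, a)" i] by simp
  moreover have "a \<in> lcar Q" using a by (auto simp: quotZ_simps gr_carrier)
  ultimately show "central_part a \<in> lgr (center L) i"
    using iso_on_quotient by (simp add: mem_Times_iff)
qed

lemma central_part_br:
  assumes a: "a \<in> lcar Q" and b: "b \<in> lcar Q"
  shows "ladd L (\<nu> (r a b)) (central_part (lbr Q a b)) = s (\<mu> a) (\<mu> b)"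
proof -
  have rab: "r a b \<in> Z" and ab: "lbr Q a b \<in> lcar Q"
    using factor_set_closed[OF r a b] quotZ_br_closed[OF a b] .
  have "lbr (pair_lsa L r) (lzero L, a) (lzero L, b)
      = ladd (pair_lsa L r) (r a b, lzero Q) (lzero L, lbr Q a b)"
    using rab ab center_carrier by simp
  then have "\<phi> (lbr (pair_lsa L r) (lzero L, a) (lzero L, b))
      = ladd (pair_lsa L s) (\<phi> (r a b, lzero Q)) (\<phi> (lzero L, lbr Q a b))"
    using rab ab
      even_lin_add[OF lsa_iso_even_lin[OF \<phi>], of "(r a b, lzero Q)" "(lzero L, lbr Q a b)"]
    by simp
  then have "fst (\<phi> (lbr (pair_lsa L r) (lzero L, a) (lzero L, b)))
      = ladd L (\<nu> (r a b)) (central_part (lbr Q a b))"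
    using rab ab \<phi>_center iso_on_quotient by simp
  moreover have "\<phi> (lbr (pair_lsa L r) (lzero L, a) (lzero L, b))
      = lbr (pair_lsa L s) (\<phi> (lzero L, a)) (\<phi> (lzero L, b))"
    using a b lsa_iso_br[OF \<phi>, of "(lzero L, a)" "(lzero L, b)"] by simp
  ultimately show ?thesis using a b iso_on_quotient by simp
qed

lemma twist_of_induced_iso:
  "\<exists>\<gamma>. even_lin Q (center L) \<gamma> \<and>
    (\<forall>a\<in>lcar Q. \<forall>b\<in>lcar Q. \<nu> (ladd L (r a b) (\<gamma> (lbr Q a b))) = s (\<mu> a) (\<mu> b))"
proof (intro exI conjI ballI)
  let ?\<gamma> = "inv_into Z \<nu> \<circ> central_part"
  have \<nu>_lin: "even_lin (center L) (center L) \<nu>" and \<nu>_bij: "bij_betw \<nu> Z Z"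
    using lsa_aut_even_lin[OF \<nu>] lsa_aut_bij[OF \<nu>] by simp_all
  have \<nu>_inv: "even_lin (center L) (center L) (inv_into Z \<nu>)"
    using even_lin_inv_into[OF graded_vs_center graded_vs_center \<nu>_lin] \<nu>_bij by simp
  then show "even_lin Q (center L) ?\<gamma>"
    using central_part_even_lin even_lin_comp by blast
  fix a b assume a: "a \<in> lcar Q" and b: "b \<in> lcar Q"
  have ab: "lbr Q a b \<in> lcar Q" using quotZ_br_closed[OF a b] .
  have "\<nu> (?\<gamma> (lbr Q a b)) = central_part (lbr Q a b)"
    using iso_on_quotient(2)[OF ab] bij_betw_imp_surj_on[OF \<nu>_bij] by (simp add: f_inv_into_f)
  moreover have "?\<gamma> (lbr Q a b) \<in> Z"
    using even_lin_carrier[OF \<nu>_inv] iso_on_quotient(2)[OF ab] by simp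
  ultimately show "\<nu> (ladd L (r a b) (?\<gamma> (lbr Q a b))) = s (\<mu> a) (\<mu> b)"
    using even_lin_add[OF \<nu>_lin] factor_set_closed[OF r a b] central_part_br[OF a b] by simp
qed

end

lemma induced_iso_of_twist:
  assumes \<mu>: "lsa_aut Q \<mu>" and \<nu>: "lsa_aut (center L) \<nu>" and \<delta>: "even_lin Q (center L) \<delta>"
    and twist: "\<forall>a\<in>lcar Q. \<forall>b\<in>lcar Q. \<nu> (ladd L (r a b) (\<delta> (lbr Q a b))) = s (\<mu> a) (\<mu> b)"
  shows "\<exists>\<phi>. lsa_iso (pair_lsa L r) (pair_lsa L s) \<phi> \<and> \<phi> ` ZR L = ZR L \<and>
    (\<forall>a\<in>lcar Q.
      coset (pair_lsa L s) (\<phi> (lzero L, a)) (ZR L) = coset (pair_lsa L s) (lzero L, \<mu> a) (ZR L)) \<and>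
    (\<forall>x\<in>Z. \<phi> (x, lzero Q) = (\<nu> x, lzero Q))"
proof (intro exI conjI ballI)
  note maps = lsa_aut_even_lin[OF \<mu>] lsa_aut_bij[OF \<mu>] lsa_aut_even_lin[OF \<nu>]
    lsa_aut_bij[OF \<nu>, simplified] \<delta>
  show "lsa_iso (pair_lsa L r) (pair_lsa L s) (pair_map \<mu> \<nu> \<delta>)"
    unfolding lsa_iso_def bij_betw_def
    using pair_map_hom[OF maps] pair_map_inj[OF maps] pair_map_image[OF maps] lsa_aut_br[OF \<mu>] twist
    by simp
  show "pair_map \<mu> \<nu> \<delta> ` ZR L = ZR L" by (rule pair_map_ZR[OF maps])
  show "coset (pair_lsa L s) (pair_map \<mu> \<nu> \<delta> (lzero L, a)) (ZR L)
    = coset (pair_lsa L s) (lzero L, \<mu> a) (ZR L)" if "a \<in> lcar Q" for a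
    using pair_map_coset[OF maps that] .
  show "pair_map \<mu> \<nu> \<delta> (x, lzero Q) = (\<nu> x, lzero Q)" if "x \<in> Z" for x
    using pair_map_center[OF maps that] .
qed

end

theorem lemma3p5:
  fixes L :: "('k::field, 'a) lsa"
    and r s :: "'a set \<Rightarrow> 'a set \<Rightarrow> 'a"
  assumes char2: "(2::'k) \<noteq> 0" and char3: "(3::'k) \<noteq> 0"
    and L: "is_lsa L" and fd: "fin_dim L"
    and r: "factor_set L r" and s: "factor_set L s"
  shows
   "(\<forall>lam \<mu> \<nu>.
       lsa_iso (pair_lsa L r) (pair_lsa L s) lam \<and>
       lam ` ZR L = ZR L \<and>
       lsa_aut (quotZ L) \<mu> \<and> lsa_aut (center L) \<nu> \<and>
       (\<forall>a\<in>lcar (quotZ L).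
          coset (pair_lsa L s) (lam (lzero L, a)) (ZR L)
            = coset (pair_lsa L s) (lzero L, \<mu> a) (ZR L)) \<and>
       (\<forall>x\<in>center_set L. lam (x, lzero (quotZ L)) = (\<nu> x, lzero (quotZ L)))
     \<longrightarrow> (\<exists>\<gamma>. even_lin (quotZ L) (center L) \<gamma> \<and>
            (\<forall>a\<in>lcar (quotZ L). \<forall>b\<in>lcar (quotZ L).
               \<nu> (ladd L (r a b) (\<gamma> (lbr (quotZ L) a b))) = s (\<mu> a) (\<mu> b))))
    \<and>
    (\<forall>\<mu> \<nu> \<delta>.
       lsa_aut (quotZ L) \<mu> \<and> lsa_aut (center L) \<nu> \<and>
       even_lin (quotZ L) (center L) \<delta> \<and>
       (\<forall>a\<in>lcar (quotZ L). \<forall>b\<in>lcar (quotZ L).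
          \<nu> (ladd L (r a b) (\<delta> (lbr (quotZ L) a b))) = s (\<mu> a) (\<mu> b))
     \<longrightarrow> (\<exists>lam. lsa_iso (pair_lsa L r) (pair_lsa L s) lam \<and>
            lam ` ZR L = ZR L \<and>
            (\<forall>a\<in>lcar (quotZ L).
               coset (pair_lsa L s) (lam (lzero L, a)) (ZR L)
                 = coset (pair_lsa L s) (lzero L, \<mu> a) (ZR L)) \<and>
            (\<forall>x\<in>center_set L. lam (x, lzero (quotZ L)) = (\<nu> x, lzero (quotZ L)))))"
proof -
  interpret lie_superalgebra L by unfold_locales (fact L)
  show ?thesis
    by (intro conjI allI impI; elim conjE;
        rule twist_of_induced_iso[OF r] induced_iso_of_twist; assumption)
qed

end
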